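(* Let $X$ be a gamble and $\varepsilon>0$. (a) Let $\underline{P}$ be defined on $\mathcal{D}_0^{\le}(X)=\{I_{(X\le-\varepsilon)}, -X^2\}$, and let $\mathcal{M}_0^{\le}(X)$ be the set of dF-coherent previsions $P$ on $\mathcal{D}_0^{\le}(X)\cup\{X\}$ with $P\ge\underline{P}$ on $\mathcal{D}_0^{\le}(X)$ and $P(X)=0$. If $\mathcal{M}_0^{\le}(X)\neq\emptyset$, then $\underline{P}(X\le-\varepsilon)\le\frac{\overline{P}(X^2)}{\overline{P}(X^2)+\varepsilon^2}$. (b) Let $\underline{P}$ be defined on $\mathcal{D}_0^{\ge}(X)=\{I_{(X\ge\varepsilon)}, -X^2\}$, and let $\mathcal{M}_0^{\ge}(X)$ be the set of dF-coherent previsions $P$ on $\mathcal{D}_0^{\ge}(X)\cup\{X\}$ with $P\ge\underline{P}$ on $\mathcal{D}_0^{\ge}(X)$ and $P(X)=0$. If $\mathcal{M}_0^{\ge}(X)\neq\emptyset$, then $\underline{P}(X\ge\varepsilon)\le\frac{\overline{P}(X^2)}{\overline{P}(X^2)+\varepsilon^2}$. Here $\overline{P}(X^2)=-\underline{P}(-X^2)$.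
   Context: $\Pi$ is a partition of the sure event into pairwise disjoint non-impossible events; a gamble is a bounded map $X:\Pi\to\mathbb{R}$; $(X\le c)$, $(X\ge c)$ are events with indicators $I_{(X\le c)}$, $I_{(X\ge c)}$, and $\underline{P}(X\le c)=\underline{P}(I_{(X\le c)})$. A lower prevision is just a real-valued map on a set of gambles; no consistency is assumed beyond the stated hypothesis. A map $P:\mathcal{D}\to\mathbb{R}$ is a dF-coherent prevision iff for all $n\in\mathbb{N}$, $s_0,\dots,s_n\in\mathbb{R}$, $X_0,\dots,X_n\in\mathcal{D}$, $\sup\sum_{i=0}^n s_i(X_i-P(X_i))\ge 0$. *)

theory Defs
  imports "HOL-Analysis.Analysis"
begin

text \<open>The partition \<open>\<Pi>\<close> is modelled by a type \<open>'w\<close> (its elements are the atoms,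
  automatically nonempty). A gamble is a bounded real map on \<open>\<Pi>\<close>.\<close>

definition gamble :: "('w \<Rightarrow> real) \<Rightarrow> bool" where
  "gamble X \<longleftrightarrow> (\<exists>B. \<forall>w. \<bar>X w\<bar> \<le> B)"

definition dF_coherent :: "(('w \<Rightarrow> real) \<Rightarrow> real) \<Rightarrow> ('w \<Rightarrow> real) set \<Rightarrow> bool" where
  "dF_coherent P D \<longleftrightarrow>
     (\<forall>(n::nat) (s::nat \<Rightarrow> real) (Xs::nat \<Rightarrow> 'w \<Rightarrow> real).
        (\<forall>i\<le>n. Xs i \<in> D) \<longrightarrow>
        (SUP w. \<Sum>i\<le>n. s i * (Xs i w - P (Xs i))) \<ge> 0)"

definition D0_le :: "('w \<Rightarrow> real) \<Rightarrow> real \<Rightarrow> ('w \<Rightarrow> real) set" where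
  "D0_le X eps = {indicator {w. X w \<le> - eps}, (\<lambda>w. - ((X w)^2))}"

definition D0_ge :: "('w \<Rightarrow> real) \<Rightarrow> real \<Rightarrow> ('w \<Rightarrow> real) set" where
  "D0_ge X eps = {indicator {w. X w \<ge> eps}, (\<lambda>w. - ((X w)^2))}"

definition M0 :: "('w \<Rightarrow> real) set \<Rightarrow> (('w \<Rightarrow> real) \<Rightarrow> real) \<Rightarrow> ('w \<Rightarrow> real)
                  \<Rightarrow> (('w \<Rightarrow> real) \<Rightarrow> real) set" where
  "M0 D LP X = {P. dF_coherent P (D \<union> {X}) \<and> (\<forall>Y\<in>D. P Y \<ge> LP Y) \<and> P X = 0}"

definition upper_sq :: "(('w \<Rightarrow> real) \<Rightarrow> real) \<Rightarrow> ('w \<Rightarrow> real) \<Rightarrow> real" where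
  "upper_sq LP X = - LP (\<lambda>w. - ((X w)^2))"

end

theory Submission
  imports Defs
begin

text \<open>Cantelli's one-sided Chebyshev inequality, for coherent previsions. Let
  \<open>q = P(X\<^sup>2)\<close> and \<open>t \<ge> 0\<close>. On \<open>(X \<le> -\<epsilon>)\<close> we have \<open>(t - X)\<^sup>2 \<ge> (t + \<epsilon>)\<^sup>2\<close>, so with
  \<open>I\<close> the indicator of \<open>(X \<le> -\<epsilon>)\<close> the gamble \<open>(t + \<epsilon>)\<^sup>2 I - X\<^sup>2 + 2 t X\<close> never exceeds \<open>t\<^sup>2\<close>. Coherence and \<open>P(X) = 0\<close>
  give \<open>(t + \<epsilon>)\<^sup>2 P(X \<le> -\<epsilon>) \<le> t\<^sup>2 + q\<close>, and the optimal choice \<open>t = q / \<epsilon>\<close> yields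
  \<open>P(X \<le> -\<epsilon>) \<le> q / (q + \<epsilon>\<^sup>2)\<close>. Passing from \<open>P\<close> to the lower prevision it dominates
  only increases \<open>q\<close>, and \<open>q / (q + \<epsilon>\<^sup>2)\<close> is increasing in \<open>q\<close>. The upper tail is the
  same argument for \<open>-X\<close>.\<close>

lemma dF_coherent_sum_le:
  fixes P :: "('w \<Rightarrow> real) \<Rightarrow> real" and n :: nat
  assumes coh: "dF_coherent P D" and Xs: "\<And>i. i \<le> n \<Longrightarrow> Xs i \<in> D"
    and bound: "\<And>w. (\<Sum>i\<le>n. s i * Xs i w) \<le> K"
  shows "(\<Sum>i\<le>n. s i * P (Xs i)) \<le> K"
proof -
  have gain: "(\<Sum>i\<le>n. s i * (Xs i w - P (Xs i))) = (\<Sum>i\<le>n. s i * Xs i w) - (\<Sum>i\<le>n. s i * P (Xs i))"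
    for w by (simp add: right_diff_distrib sum_subtractf)
  have "0 \<le> (SUP w. \<Sum>i\<le>n. s i * (Xs i w - P (Xs i)))"
    using coh Xs unfolding dF_coherent_def by blast
  also have "\<dots> \<le> K - (\<Sum>i\<le>n. s i * P (Xs i))"
    unfolding gain by (rule cSUP_least) (use bound in \<open>auto intro: diff_right_mono\<close>)
  finally show ?thesis by simp
qed

lemma dF_coherent_le_bound:
  fixes P :: "('w \<Rightarrow> real) \<Rightarrow> real"
  assumes "dF_coherent P D" and "Y \<in> D" and "\<And>w. Y w \<le> K"
  shows "P Y \<le> K"
  using dF_coherent_sum_le[of P D 0 "\<lambda>_. Y" "\<lambda>_. 1" K] assms by simp

lemma dF_coherent_lincomb3_le:
  fixes P :: "('w \<Rightarrow> real) \<Rightarrow> real"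
  assumes "dF_coherent P D" and "A \<in> D" "B \<in> D" "C \<in> D"
    and "\<And>w. a * A w + b * B w + c * C w \<le> K"
  shows "a * P A + b * P B + c * P C \<le> K"
proof -
  define s :: "nat \<Rightarrow> real" where "s = (\<lambda>i. if i = 0 then a else if i = 1 then b else c)"
  define Xs where "Xs = (\<lambda>i::nat. if i = 0 then A else if i = 1 then B else C)"
  have expand: "(\<Sum>i\<le>2. s i * f (Xs i)) = a * f A + b * f B + c * f C" for f :: "_ \<Rightarrow> real"
    by (simp add: s_def Xs_def numeral_2_eq_2 atMost_Suc)
  show ?thesis
    using dF_coherent_sum_le[of P D 2 Xs s K] assms expand[of P] expand[of "\<lambda>Y. Y _"]
    by (auto simp: Xs_def)
qed

lemma upper_sq_nonneg:
  fixes P :: "('w \<Rightarrow> real) \<Rightarrow> real"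
  assumes "dF_coherent P D" and "(\<lambda>w. - ((Z w)^2)) \<in> D"
  shows "0 \<le> upper_sq P Z"
  using dF_coherent_le_bound[OF assms, of 0] by (simp add: upper_sq_def)

text \<open>The sign \<open>\<sigma>\<close> selects the tail: \<open>\<sigma> = -1\<close> for \<open>(Z \<le> -\<epsilon>)\<close>, \<open>\<sigma> = 1\<close> for \<open>(Z \<ge> \<epsilon>)\<close>.\<close>

lemma dF_coherent_cantelli:
  fixes P :: "('w \<Rightarrow> real) \<Rightarrow> real" and Z :: "'w \<Rightarrow> real"
  assumes coh: "dF_coherent P D"
    and I: "indicator A \<in> D" and N: "(\<lambda>w. - ((Z w)^2)) \<in> D" and Z: "Z \<in> D"
    and PZ: "P Z = 0" and eps: "eps > 0"
    and sign: "\<bar>\<sigma>\<bar> = 1" and tail: "\<And>w. w \<in> A \<Longrightarrow> eps \<le> \<sigma> * Z w"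
  shows "P (indicator A) \<le> upper_sq P Z / (upper_sq P Z + eps^2)"
proof -
  define q where "q = upper_sq P Z"
  have q: "q \<ge> 0" using upper_sq_nonneg[OF coh N] by (simp add: q_def)
  define t where "t = q / eps"
  have t: "t \<ge> 0" using q eps by (simp add: t_def)
  have "(t + eps)^2 * P (indicator A) + 1 * P (\<lambda>w. - ((Z w)^2)) + (- 2 * \<sigma> * t) * P Z \<le> t^2"
  proof (rule dF_coherent_lincomb3_le[OF coh I N Z])
    fix w
    have "\<sigma>^2 = 1" using sign by (simp add: abs_square_eq_1)
    then have square: "- ((Z w)^2) - 2 * \<sigma> * t * Z w = t^2 - (t + \<sigma> * Z w)^2"
      by (simp add: power2_eq_square algebra_simps)
    have "(t + eps)^2 * indicator A w \<le> (t + \<sigma> * Z w)^2"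
      using tail[of w] t eps by (cases "w \<in> A") (auto intro: power_mono)
    then show "(t + eps)^2 * indicator A w + 1 * - ((Z w)^2) + (- 2 * \<sigma> * t) * Z w \<le> t^2"
      using square by (simp add: algebra_simps)
  qed
  then have bound: "(t + eps)^2 * P (indicator A) \<le> t^2 + q"
    using PZ by (simp add: q_def upper_sq_def)
  have "(t + eps)^2 = (q + eps^2)^2 / eps^2" "t^2 + q = q * (q + eps^2) / eps^2"
    using eps by (simp_all add: t_def field_simps power2_eq_square)
  with bound have "(q + eps^2)^2 * P (indicator A) / eps^2 \<le> q * (q + eps^2) / eps^2"
    by simp
  then have "(q + eps^2) * ((q + eps^2) * P (indicator A)) \<le> (q + eps^2) * q"
    using eps by (simp add: divide_le_cancel power2_eq_square algebra_simps)
  moreover have pos: "q + eps^2 > 0" using q eps by (simp add: add_nonneg_pos)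
  ultimately have "(q + eps^2) * P (indicator A) \<le> q"
    by (metis mult_le_cancel_left_pos)
  with pos show ?thesis
    by (simp add: q_def pos_le_divide_eq mult.commute)
qed

lemma divide_add_const_mono:
  fixes q u c :: real
  assumes "0 \<le> q" "q \<le> u" "0 < c"
  shows "q / (q + c) \<le> u / (u + c)"
  using assms by (simp add: divide_simps mult_right_mono algebra_simps)

lemma M0_cantelli:
  fixes X :: "'w \<Rightarrow> real"
  assumes P: "P \<in> M0 D LP X"
    and I: "indicator A \<in> D" and N: "(\<lambda>w. - ((X w)^2)) \<in> D" and eps: "eps > 0"
    and sign: "\<bar>\<sigma>\<bar> = 1" and tail: "\<And>w. w \<in> A \<Longrightarrow> eps \<le> \<sigma> * X w"
  shows "LP (indicator A) \<le> upper_sq LP X / (upper_sq LP X + eps^2)"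
proof -
  from P have coh: "dF_coherent P (D \<union> {X})" and dom: "\<And>Y. Y \<in> D \<Longrightarrow> LP Y \<le> P Y"
    and PX: "P X = 0" by (auto simp: M0_def)
  have "LP (indicator A) \<le> P (indicator A)" using dom I .
  also have "\<dots> \<le> upper_sq P X / (upper_sq P X + eps^2)"
    using dF_coherent_cantelli[OF coh _ _ _ PX eps sign tail] I N by blast
  also have "\<dots> \<le> upper_sq LP X / (upper_sq LP X + eps^2)"
  proof (rule divide_add_const_mono)
    show "0 \<le> upper_sq P X" using upper_sq_nonneg[OF coh] N by blast
    show "upper_sq P X \<le> upper_sq LP X" using dom[OF N] by (simp add: upper_sq_def)
  qed (use eps in simp)
  finally show ?thesis .
qed

theorem proposition4:
  fixes X :: "'w \<Rightarrow> real" and eps :: real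
    and LPa LPb :: "('w \<Rightarrow> real) \<Rightarrow> real"
  assumes "gamble X" and "eps > 0"
  shows "(M0 (D0_le X eps) LPa X \<noteq> {} \<longrightarrow>
           LPa (indicator {w. X w \<le> - eps}) \<le> upper_sq LPa X / (upper_sq LPa X + eps^2))
       \<and> (M0 (D0_ge X eps) LPb X \<noteq> {} \<longrightarrow>
           LPb (indicator {w. X w \<ge> eps}) \<le> upper_sq LPb X / (upper_sq LPb X + eps^2))"
proof (intro conjI impI)
  assume "M0 (D0_le X eps) LPa X \<noteq> {}"
  then obtain P where "P \<in> M0 (D0_le X eps) LPa X" by blast
  from M0_cantelli[OF this _ _ \<open>eps > 0\<close>, of "{w. X w \<le> - eps}" "-1"]
  show "LPa (indicator {w. X w \<le> - eps}) \<le> upper_sq LPa X / (upper_sq LPa X + eps^2)"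
    by (simp add: D0_le_def)
next
  assume "M0 (D0_ge X eps) LPb X \<noteq> {}"
  then obtain P where "P \<in> M0 (D0_ge X eps) LPb X" by blast
  from M0_cantelli[OF this _ _ \<open>eps > 0\<close>, of "{w. X w \<ge> eps}" 1]
  show "LPb (indicator {w. X w \<ge> eps}) \<le> upper_sq LPb X / (upper_sq LPb X + eps^2)"
    by (simp add: D0_ge_def)
qed

end
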